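(* Let $G$ be a group, $H$ an amenable normal subgroup of $G$, and $\rho\colon G\to G/H$ the natural homomorphism. Suppose $U_1,U_2\subseteq G$ are finite subsets such that for every pair of finite subsets $F_1,F_2\subseteq G$ we have $|F_1U_1\cup F_2U_2|\geq|F_1|+|F_2|$. Let $U_i'=\rho(U_i)$. Then for every pair of finite subsets $F_1',F_2'\subseteq G/H$ we have $|F_1'U_1'\cup F_2'U_2'|\geq|F_1'|+|F_2'|$.
   Context: $FU=\{fu: f\in F, u\in U\}$. *)

theory Defs
  imports "HOL-Algebra.Algebra"
begin

text \<open>Amenability of a (discrete) group, via the Folner condition:
  for every finite subset K of the group and every eps > 0 there is a finite
  nonempty subset F with |gF symmetric-difference F| < eps |F| for all g in K.\<close>

definition amenable :: "('a, 'b) monoid_scheme \<Rightarrow> bool" where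
  "amenable G \<longleftrightarrow>
     (\<forall>K (\<epsilon>::real). K \<subseteq> carrier G \<and> finite K \<and> \<epsilon> > 0 \<longrightarrow>
        (\<exists>F. F \<subseteq> carrier G \<and> finite F \<and> F \<noteq> {} \<and>
             (\<forall>g\<in>K. real (card (((g <#\<^bsub>G\<^esub> F) - F) \<union> (F - (g <#\<^bsub>G\<^esub> F))))
                      < \<epsilon> * real (card F))))"

end

theory Submission
  imports Defs
begin

text \<open>Fix a transversal \<open>rep\<close> of \<open>H\<close> in \<open>G\<close>; every \<open>x\<close> is determined by its coset \<open>H x\<close> and its
  offset \<open>rep(H x) x\<^sup>-\<^sup>1 \<in> H\<close>. For finite \<open>F \<subseteq> H\<close>, lift \<open>F\<^sub>i'\<close> to \<open>F\<^sub>i = F\<^sup>-\<^sup>1 rep(F\<^sub>i')\<close>, so that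
  \<open>|F\<^sub>i| = |F| |F\<^sub>i'|\<close>. Each element of \<open>F\<^sub>1U\<^sub>1 \<union> F\<^sub>2U\<^sub>2\<close> has its coset in
  \<open>Q = F\<^sub>1'U\<^sub>1' \<union> F\<^sub>2'U\<^sub>2'\<close> and its offset in \<open>KF\<close>, where \<open>K \<subseteq> H\<close> is the finite set of offsets of
  \<open>rep(F\<^sub>i')U\<^sub>i\<close> and does not depend on \<open>F\<close>. Hence \<open>|F| (|F\<^sub>1'| + |F\<^sub>2'|) \<le> |Q| |KF|\<close>, and a
  Folner set \<open>F\<close> for \<open>K\<close> with \<open>|KF| \<le> (1 + 1/(|Q| + 1)) |F|\<close> gives \<open>|F\<^sub>1'| + |F\<^sub>2'| \<le> |Q|\<close>.\<close>

lemma card_UN_le_card_plus_sum_diff: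
  assumes "finite K" "finite F" "\<And>k. k \<in> K \<Longrightarrow> finite (A k)"
  shows "card (\<Union>k\<in>K. A k) \<le> card F + (\<Sum>k\<in>K. card (A k - F))"
proof -
  have "card (\<Union>k\<in>K. A k) \<le> card (F \<union> (\<Union>k\<in>K. (A k - F)))"
    using assms by (intro card_mono) auto
  also have "\<dots> \<le> card F + card (\<Union>k\<in>K. (A k - F))"
    by (rule card_Un_le)
  also have "\<dots> \<le> card F + (\<Sum>k\<in>K. card (A k - F))"
    using card_UN_le[OF assms(1), of "\<lambda>k. A k - F"] by linarith
  finally show ?thesis .
qed

lemma set_mult_memI: "a \<in> S \<Longrightarrow> b \<in> T \<Longrightarrow> a \<otimes>\<^bsub>G\<^esub> b \<in> S <#>\<^bsub>G\<^esub> T"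
  unfolding set_mult_def by blast

lemma finite_set_mult: "finite S \<Longrightarrow> finite T \<Longrightarrow> finite (S <#>\<^bsub>G\<^esub> T)"
  unfolding set_mult_def by simp

lemma set_mult_eq_UN_l_coset: "K <#>\<^bsub>G\<^esub> F = (\<Union>k\<in>K. k <#\<^bsub>G\<^esub> F)"
  unfolding set_mult_def l_coset_def by blast

lemma amenable_subgroup_small_expansion:
  assumes "amenable (G\<lparr>carrier := H\<rparr>)" "K \<subseteq> H" "finite K" "\<epsilon> > 0"
  obtains F where "F \<subseteq> H" "finite F" "F \<noteq> {}"
    "real (card (K <#>\<^bsub>G\<^esub> F)) \<le> (1 + \<epsilon>) * real (card F)"
proof -
  define \<delta> where "\<delta> = \<epsilon> / (real (card K) + 1)"
  have "\<delta> > 0" unfolding \<delta>_def using assms(4) by (simp add: add_nonneg_pos)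
  have "(g <#\<^bsub>G\<lparr>carrier := H\<rparr>\<^esub> A) = g <#\<^bsub>G\<^esub> A" for g A
    by (simp add: l_coset_def)
  with assms(1) have "\<exists>F. F \<subseteq> H \<and> finite F \<and> F \<noteq> {} \<and> (\<forall>k\<in>K.
      real (card (((k <#\<^bsub>G\<^esub> F) - F) \<union> (F - (k <#\<^bsub>G\<^esub> F)))) < \<delta> * real (card F))"
    using \<open>\<delta> > 0\<close> assms(2,3) unfolding amenable_def by simp
  then obtain F where F: "F \<subseteq> H" "finite F" "F \<noteq> {}"
    and Folner: "\<And>k. k \<in> K \<Longrightarrow>
      real (card (((k <#\<^bsub>G\<^esub> F) - F) \<union> (F - (k <#\<^bsub>G\<^esub> F)))) < \<delta> * real (card F)"
    by blast
  have finite_l_coset: "finite (k <#\<^bsub>G\<^esub> F)" for k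
    unfolding l_coset_def using F(2) by simp
  have diff_le_sym_diff: "card ((k <#\<^bsub>G\<^esub> F) - F) \<le> card (((k <#\<^bsub>G\<^esub> F) - F) \<union> (F - (k <#\<^bsub>G\<^esub> F)))" for k
    using finite_l_coset F(2) by (intro card_mono) auto
  have "real (card (K <#>\<^bsub>G\<^esub> F))
      \<le> real (card F) + (\<Sum>k\<in>K. real (card ((k <#\<^bsub>G\<^esub> F) - F)))"
    using card_UN_le_card_plus_sum_diff[OF assms(3) F(2) finite_l_coset, THEN of_nat_mono[where 'a=real]]
    unfolding set_mult_eq_UN_l_coset by simp
  also have "\<dots> \<le> real (card F) + (\<Sum>k\<in>K. \<delta> * real (card F))"
    using Folner diff_le_sym_diff
    by (intro add_left_mono sum_mono) (meson less_imp_le of_nat_mono order_trans)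
  also have "\<dots> \<le> (1 + \<epsilon>) * real (card F)"
    using assms(4) unfolding \<delta>_def by (simp add: field_simps)
  finally show ?thesis
    using F that by blast
qed

lemma le_of_mult_le_mult_small_expansion:
  fixes a c m n :: nat
  assumes "c > 0" "c * a \<le> n * m" "real m \<le> (1 + 1 / (real n + 1)) * real c"
  shows "a \<le> n"
proof -
  have "real c * real a \<le> real n * real m"
    using assms(2) by (metis of_nat_mono of_nat_mult)
  also have "\<dots> \<le> real c * (real n * (1 + 1 / (real n + 1)))"
    using mult_left_mono[OF assms(3), of "real n"] by (simp add: ac_simps)
  also have "\<dots> < real c * (real n + 1)"
    using assms(1) by (simp add: field_simps)
  finally show ?thesis
    using assms(1) by (simp add: mult_less_cancel_left_pos)
qed

locale quotient_section = normal H G for H and G (structure) +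
  fixes rep :: "'a set \<Rightarrow> 'a"
  assumes rep_closed: "C \<in> carrier (G Mod H) \<Longrightarrow> rep C \<in> carrier G"
    and rcos_rep: "C \<in> carrier (G Mod H) \<Longrightarrow> H #> rep C = C"
begin

definition offset :: "'a \<Rightarrow> 'a" where
  "offset x = rep (H #> x) \<otimes> inv x"

definition lift :: "'a set \<Rightarrow> 'a set set \<Rightarrow> 'a set" where
  "lift F A = (\<lambda>(f, C). inv f \<otimes> rep C) ` (F \<times> A)"

lemma rcos_in_carrier_Mod: "x \<in> carrier G \<Longrightarrow> H #> x \<in> carrier (G Mod H)"
  unfolding carrier_FactGroup by blast

lemma rcos_mult_subgroup_elem: "h \<in> H \<Longrightarrow> x \<in> carrier G \<Longrightarrow> H #> (h \<otimes> x) = H #> x"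
  using coset_mult_assoc[OF subset, of h x] rcos_const[OF is_group] subset by auto

lemma offset_closed: "x \<in> carrier G \<Longrightarrow> offset x \<in> H"
  unfolding offset_def
  using rcos_module_imp[OF is_group] rcos_self[OF rep_closed subgroup_axioms] rcos_rep rcos_in_carrier_Mod
  by metis

lemma offset_mult: "h \<in> H \<Longrightarrow> y \<in> carrier G \<Longrightarrow> offset (h \<otimes> y) = offset y \<otimes> inv h"
  unfolding offset_def
  using rep_closed[OF rcos_in_carrier_Mod] by (simp add: rcos_mult_subgroup_elem inv_mult_group m_assoc)

lemma inj_on_rcos_offset: "inj_on (\<lambda>x. (H #> x, offset x)) (carrier G)"
proof (rule inj_onI)
  fix x y assume x: "x \<in> carrier G" and y: "y \<in> carrier G"
    and eq: "(H #> x, offset x) = (H #> y, offset y)"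
  then have "inv x = inv y"
    unfolding offset_def using rep_closed[OF rcos_in_carrier_Mod[OF x]] by (metis inv_closed l_cancel prod.inject)
  with x y show "x = y" by (metis inv_inv)
qed

lemma card_le_card_rcosets_times_card_offsets:
  assumes "T \<subseteq> carrier G" "finite Q" "finite W"
    and "\<And>x. x \<in> T \<Longrightarrow> H #> x \<in> Q" "\<And>x. x \<in> T \<Longrightarrow> offset x \<in> W"
  shows "card T \<le> card Q * card W"
proof -
  have "card T = card ((\<lambda>x. (H #> x, offset x)) ` T)"
    using inj_on_subset[OF inj_on_rcos_offset assms(1)] by (simp add: card_image)
  also have "\<dots> \<le> card (Q \<times> W)"
    using assms by (intro card_mono) auto
  finally show ?thesis by (simp add: card_cartesian_product)
qed

lemma lift_closed: "F \<subseteq> H \<Longrightarrow> A \<subseteq> carrier (G Mod H) \<Longrightarrow> lift F A \<subseteq> carrier G"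
  unfolding lift_def using rep_closed subset by (auto intro!: m_closed)

lemma finite_lift: "finite F \<Longrightarrow> finite A \<Longrightarrow> finite (lift F A)"
  unfolding lift_def by simp

lemma card_lift:
  assumes "F \<subseteq> H" "A \<subseteq> carrier (G Mod H)"
  shows "card (lift F A) = card F * card A"
proof -
  have "inj_on (\<lambda>(f, C). inv f \<otimes> rep C) (F \<times> A)"
  proof (rule inj_onI, clarify)
    fix f C f' C'
    assume f: "f \<in> F" "f' \<in> F" and C: "C \<in> A" "C' \<in> A"
      and eq: "inv f \<otimes> rep C = inv f' \<otimes> rep C'"
    have f_H: "f \<in> H" "f' \<in> H" and C_Mod: "C \<in> carrier (G Mod H)" "C' \<in> carrier (G Mod H)"
      using f C assms by auto
    have "C = H #> (inv f \<otimes> rep C)" "C' = H #> (inv f' \<otimes> rep C')"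
      using f_H C_Mod by (simp_all add: rcos_mult_subgroup_elem rep_closed rcos_rep)
    with eq have "C = C'" by simp
    with eq have "inv f \<otimes> rep C = inv f' \<otimes> rep C"
      by simp
    then have "inv f = inv f'"
      using f_H C_Mod by (metis r_cancel rep_closed inv_closed subsetD[OF subset])
    then have "f = f'"
      using f_H inv_inv[OF subsetD[OF subset]] by metis
    with \<open>C = C'\<close> show "f = f' \<and> C = C'" by simp
  qed
  then show ?thesis
    unfolding lift_def by (simp add: card_image card_cartesian_product)
qed

lemma lift_mult_rcos_offset:
  assumes "x \<in> lift F A <#> U" "F \<subseteq> H" "A \<subseteq> carrier (G Mod H)" "U \<subseteq> carrier G"
  shows "H #> x \<in> A <#>\<^bsub>G Mod H\<^esub> ((\<lambda>g. H #> g) ` U)"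
    and "offset x \<in> offset ` (rep ` A <#> U) <#> F"
proof -
  obtain f C u where f: "f \<in> F" and C: "C \<in> A" and u: "u \<in> U"
    and x: "x = inv f \<otimes> (rep C \<otimes> u)"
    using assms rep_closed subset unfolding lift_def set_mult_def by (force simp: m_assoc)
  have f_H: "inv f \<in> H" and "rep C \<in> carrier G" "u \<in> carrier G"
    using f C u assms rep_closed by auto
  then have "H #> x = (H #> rep C) <#> (H #> u)"
    using x rcos_mult_subgroup_elem rcos_sum by simp
  also have "\<dots> = C <#> (H #> u)"
    using C assms(3) rcos_rep by auto
  finally have "H #> x = C <#> (H #> u)" .
  moreover have "offset x = offset (rep C \<otimes> u) \<otimes> f"
    using x f_H f assms(2) \<open>rep C \<in> carrier G\<close> \<open>u \<in> carrier G\<close> offset_mult subset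
    by (metis inv_inv m_closed subsetD)
  moreover have "C <#> (H #> u) \<in> A <#>\<^bsub>G Mod H\<^esub> ((\<lambda>g. H #> g) ` U)"
    using set_mult_memI[of C A "H #> u" _ "G Mod H"] C u by simp
  moreover have "offset (rep C \<otimes> u) \<otimes> f \<in> offset ` (rep ` A <#> U) <#> F"
    using C u f by (intro set_mult_memI imageI) auto
  ultimately show "H #> x \<in> A <#>\<^bsub>G Mod H\<^esub> ((\<lambda>g. H #> g) ` U)"
    and "offset x \<in> offset ` (rep ` A <#> U) <#> F"
    by simp_all
qed

lemma card_lift_union_le:
  assumes "F \<subseteq> H" "finite F"
    and "A1 \<subseteq> carrier (G Mod H)" "A2 \<subseteq> carrier (G Mod H)" "finite A1" "finite A2"
    and "U1 \<subseteq> carrier G" "U2 \<subseteq> carrier G" "finite U1" "finite U2"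
  shows "card ((lift F A1 <#> U1) \<union> (lift F A2 <#> U2))
    \<le> card ((A1 <#>\<^bsub>G Mod H\<^esub> ((\<lambda>g. H #> g) ` U1)) \<union> (A2 <#>\<^bsub>G Mod H\<^esub> ((\<lambda>g. H #> g) ` U2)))
      * card (offset ` ((rep ` A1 <#> U1) \<union> (rep ` A2 <#> U2)) <#> F)"
proof (rule card_le_card_rcosets_times_card_offsets)
  show "(lift F A1 <#> U1) \<union> (lift F A2 <#> U2) \<subseteq> carrier G"
    using assms lift_closed set_mult_closed by (metis Un_least)
  show "finite ((A1 <#>\<^bsub>G Mod H\<^esub> ((\<lambda>g. H #> g) ` U1)) \<union> (A2 <#>\<^bsub>G Mod H\<^esub> ((\<lambda>g. H #> g) ` U2)))"
    using assms by (simp add: finite_set_mult)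
  show "finite (offset ` ((rep ` A1 <#> U1) \<union> (rep ` A2 <#> U2)) <#> F)"
    using assms by (simp add: finite_set_mult)
next
  let ?R = "(rep ` A1 <#> U1) \<union> (rep ` A2 <#> U2)"
  have mono: "offset ` (rep ` A <#> U) <#> F \<subseteq> offset ` ?R <#> F"
    if "rep ` A <#> U \<subseteq> ?R" for A U
    using that by (intro mono_set_mult image_mono) auto
  fix x assume "x \<in> (lift F A1 <#> U1) \<union> (lift F A2 <#> U2)"
  then show "H #> x \<in> (A1 <#>\<^bsub>G Mod H\<^esub> ((\<lambda>g. H #> g) ` U1)) \<union> (A2 <#>\<^bsub>G Mod H\<^esub> ((\<lambda>g. H #> g) ` U2))"
    and "offset x \<in> offset ` ?R <#> F"
    using lift_mult_rcos_offset[OF _ assms(1)] assms(3,4,7,8) mono[of A1 U1] mono[of A2 U2]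
    by blast+
qed

end

lemma (in normal) ex_quotient_section: "\<exists>rep. quotient_section H G rep"
proof -
  have "\<forall>C\<in>carrier (G Mod H). \<exists>x. x \<in> carrier G \<and> H #> x = C"
    unfolding carrier_FactGroup by blast
  then obtain rep where "\<forall>C\<in>carrier (G Mod H). rep C \<in> carrier G \<and> H #> rep C = C"
    by (metis bchoice)
  then have "quotient_section H G rep"
    by unfold_locales auto
  then show ?thesis by blast
qed

theorem lemma3p4:
  fixes G (structure) and H U1 U2 :: "'a set"
  assumes "group G"
    and "H \<lhd> G"
    and "amenable (G\<lparr>carrier := H\<rparr>)"
    and "U1 \<subseteq> carrier G" and "U2 \<subseteq> carrier G"
    and "finite U1" and "finite U2"
    and "\<forall>F1 F2. F1 \<subseteq> carrier G \<longrightarrow> F2 \<subseteq> carrier G \<longrightarrow> finite F1 \<longrightarrow> finite F2 \<longrightarrow>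
           card ((F1 <#> U1) \<union> (F2 <#> U2)) \<ge> card F1 + card F2"
  shows "\<forall>F1' F2'. F1' \<subseteq> carrier (G Mod H) \<longrightarrow> F2' \<subseteq> carrier (G Mod H) \<longrightarrow>
           finite F1' \<longrightarrow> finite F2' \<longrightarrow>
           card ((F1' <#>\<^bsub>G Mod H\<^esub> ((\<lambda>g. H #> g) ` U1)) \<union>
                 (F2' <#>\<^bsub>G Mod H\<^esub> ((\<lambda>g. H #> g) ` U2)))
             \<ge> card F1' + card F2'"
proof (intro allI impI)
  fix F1' F2'
  assume F': "F1' \<subseteq> carrier (G Mod H)" "F2' \<subseteq> carrier (G Mod H)" "finite F1'" "finite F2'"
  interpret normal H G by (rule assms(2))
  obtain rep where "quotient_section H G rep"
    using ex_quotient_section by blast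
  then interpret quotient_section H G rep .
  define n where "n = card ((F1' <#>\<^bsub>G Mod H\<^esub> ((\<lambda>g. H #> g) ` U1)) \<union>
                 (F2' <#>\<^bsub>G Mod H\<^esub> ((\<lambda>g. H #> g) ` U2)))"
  define K where "K = offset ` ((rep ` F1' <#> U1) \<union> (rep ` F2' <#> U2))"
  have "(rep ` F1' <#> U1) \<union> (rep ` F2' <#> U2) \<subseteq> carrier G"
    using F' assms(4,5) rep_closed by (intro Un_least set_mult_closed) auto
  then have "K \<subseteq> H"
    unfolding K_def using offset_closed by blast
  moreover have "finite K"
    unfolding K_def using F' assms(6,7) by (simp add: finite_set_mult)
  moreover have "1 / (real n + 1) > 0"
    by simp
  ultimately obtain F where F: "F \<subseteq> H" "finite F" "F \<noteq> {}"
    and small: "real (card (K <#> F)) \<le> (1 + 1 / (real n + 1)) * real (card F)"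
    by (rule amenable_subgroup_small_expansion[OF assms(3)])
  have "card F * (card F1' + card F2') \<le> card ((lift F F1' <#> U1) \<union> (lift F F2' <#> U2))"
    using assms(8)[rule_format, OF lift_closed[OF F(1) F'(1)] lift_closed[OF F(1) F'(2)]
        finite_lift[OF F(2) F'(3)] finite_lift[OF F(2) F'(4)]]
    by (simp add: card_lift F(1) F'(1,2) distrib_left)
  also have "\<dots> \<le> n * card (K <#> F)"
    unfolding n_def K_def using F(1,2) F' assms(4-7) by (rule card_lift_union_le)
  finally have "card F * (card F1' + card F2') \<le> n * card (K <#> F)" .
  moreover have "card F > 0"
    using F(2,3) by (simp add: card_gt_0_iff)
  ultimately show "card F1' + card F2' \<le> n"
    using small le_of_mult_le_mult_small_expansion by blast
qed

end
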